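(* For an $N\times N$ stochastic matrix $A$, one has $\tau_t(A)\to 1$ as $t\to\infty$ if and only if $A$ is irreducible, aperiodic, and bistochastic.
   Context: Let $X$ be a square-integrable real random variable with $\mathbb E X=\theta$ and $\mathrm{Var}(X)=\sigma^2>0$. Fix an integer $N\geq 2$. For $i\in\{1,\dots,N\}$ and $t\geq 1$ let $X_t^{(i)}$ be random variables distributed as $X$, mutually independent over both $i$ and $t$, and write $\mathbf X_t=(X_t^{(1)},\dots,X_t^{(N)})^\top$. Let $A=(a_{ij})_{1\le i,j\le N}$ be a stochastic matrix ($a_{ij}\geq 0$ and every row sums to $1$). Define $\hat{\boldsymbol\theta}_1=\mathbf X_1$ and $\hat{\boldsymbol\theta}_{t+1}=\frac{t}{t+1}A\hat{\boldsymbol\theta}_t+\frac{1}{t+1}\mathbf X_{t+1}$ for $t\geq 1$. Let $\bar{\mathbb X}_{Nt}=\frac{1}{Nt}\sum_{i=1}^N\sum_{k=1}^t X_k^{(i)}$, $\mathbf 1=(1,\dots,1)^\top$, and let $\|\cdot\|$ denote the Euclidean norm. The performance ratio is $\tau_t(A)=\dfrac{\mathbb E\|(\bar{\mathbb X}_{Nt}-\theta)\mathbf 1\|^2}{\mathbb E\|\hat{\boldsymbol\theta}_t-\theta\mathbf 1\|^2}$, $t\geq 1$. $A$ is irreducible if for every $(i,j)$ there is $k\geq 0$ with $(A^k)_{ij}\neq 0$; for irreducible $A$, its period is the gcd of all $k\geq1$ with $(A^k)_{ii}>0$ (independent of $i$), and $A$ is aperiodic if this period is $1$. $A$ is bistochastic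 if moreover every column sums to $1$. *)

theory Defs
  imports "HOL-Probability.Probability"
begin

text \<open>Matrices are \<open>real^'n^'n\<close>; the index type \<open>'n\<close> plays the role of \<open>{1..N}\<close>.\<close>

primrec mpow :: "real^'n^'n \<Rightarrow> nat \<Rightarrow> real^'n^'n" where
  "mpow A 0 = mat 1"
| "mpow A (Suc k) = A ** mpow A k"

definition stochastic :: "real^'n^'n \<Rightarrow> bool" where
  "stochastic A \<longleftrightarrow> (\<forall>i j. A $ i $ j \<ge> 0) \<and> (\<forall>i. (\<Sum>j\<in>UNIV. A $ i $ j) = 1)"

definition bistochastic :: "real^'n^'n \<Rightarrow> bool" where
  "bistochastic A \<longleftrightarrow> stochastic A \<and> (\<forall>j. (\<Sum>i\<in>UNIV. A $ i $ j) = 1)"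

definition irreducible_mat :: "real^'n^'n \<Rightarrow> bool" where
  "irreducible_mat A \<longleftrightarrow> (\<forall>i j. \<exists>k. mpow A k $ i $ j \<noteq> 0)"

text \<open>Period of an irreducible matrix, computed at index \<open>i\<close> (independent of \<open>i\<close>).\<close>
definition period_at :: "real^'n^'n \<Rightarrow> 'n \<Rightarrow> nat" where
  "period_at A i = Gcd {k. k \<ge> 1 \<and> mpow A k $ i $ i > 0}"

definition aperiodic_mat :: "real^'n^'n \<Rightarrow> bool" where
  "aperiodic_mat A \<longleftrightarrow> (\<forall>i. period_at A i = 1)"

text \<open>Observations: \<open>X i t \<omega>\<close> is \<open>X_t^{(i)}(\<omega>)\<close>, meaningful for \<open>t \<ge> 1\<close>.\<close>
definition obs_vec :: "('n \<Rightarrow> nat \<Rightarrow> 'a \<Rightarrow> real) \<Rightarrow> nat \<Rightarrow> 'a \<Rightarrow> real^'n" where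
  "obs_vec X t \<omega> = (\<chi> i. X i t \<omega>)"

text \<open>\<open>theta_hat A X t\<close> for \<open>t \<ge> 1\<close>; the value at \<open>t = 0\<close> is irrelevant.\<close>
fun theta_hat :: "real^'n^'n \<Rightarrow> ('n \<Rightarrow> nat \<Rightarrow> 'a \<Rightarrow> real) \<Rightarrow> nat \<Rightarrow> 'a \<Rightarrow> real^'n" where
  "theta_hat A X 0 \<omega> = 0"
| "theta_hat A X (Suc 0) \<omega> = obs_vec X 1 \<omega>"
| "theta_hat A X (Suc (Suc t)) \<omega> =
     (real (Suc t) / real (Suc (Suc t))) *\<^sub>R (A *v theta_hat A X (Suc t) \<omega>)
     + (1 / real (Suc (Suc t))) *\<^sub>R obs_vec X (Suc (Suc t)) \<omega>"

definition grand_mean :: "('n::finite \<Rightarrow> nat \<Rightarrow> 'a \<Rightarrow> real) \<Rightarrow> nat \<Rightarrow> 'a \<Rightarrow> real" where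
  "grand_mean X t \<omega> = (\<Sum>i\<in>UNIV. \<Sum>k=1..t. X i k \<omega>) / (real CARD('n) * real t)"

definition perf_ratio ::
  "'a measure \<Rightarrow> real^'n^'n \<Rightarrow> ('n \<Rightarrow> nat \<Rightarrow> 'a \<Rightarrow> real) \<Rightarrow> real \<Rightarrow> nat \<Rightarrow> real" where
  "perf_ratio M A X \<theta> t =
     (\<integral>\<omega>. (norm ((grand_mean X t \<omega> - \<theta>) *\<^sub>R (1::real^'n)))\<^sup>2 \<partial>M)
     / (\<integral>\<omega>. (norm (theta_hat A X t \<omega> - \<theta> *\<^sub>R (1::real^'n)))\<^sup>2 \<partial>M)"

end

theory Submission
  imports Defs
begin

text \<open>Unrolling the recursion gives \<open>t (\<theta>_t - \<theta>1) = \<Sum>k<t. A^(t-1-k) (X_(k+1) - \<theta>1)\<close>.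
  The centred observations are uncorrelated with variance \<open>\<sigma>\<^sup>2\<close>, so the mean squared error of
  the estimator is \<open>\<sigma>\<^sup>2/t\<^sup>2 \<Sum>k<t. \<parallel>A^k\<parallel>\<^sup>2\<close> (Frobenius norm), against \<open>\<sigma>\<^sup>2/t\<close> for the grand
  mean. For stochastic \<open>A\<close> one has \<open>\<parallel>A^k\<parallel>\<^sup>2 = 1 + \<parallel>A^k - J/N\<parallel>\<^sup>2\<close>, hence \<open>\<tau>_t = 1/(1 + C_t)\<close>
  where \<open>C_t\<close> is the Cesaro mean of \<open>\<parallel>A^k - J/N\<parallel>\<^sup>2\<close>, and \<open>\<tau>_t \<rightarrow> 1\<close> iff \<open>C_t \<rightarrow> 0\<close>.

  If \<open>A\<close> is irreducible, aperiodic and bistochastic, some power \<open>A^m\<close> has all entries at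
  least some \<open>\<delta> > 0\<close>, and multiplying by it contracts the distance to \<open>J/N\<close> by the factor
  \<open>1 - N\<delta>\<close>; so \<open>A^k \<rightarrow> J/N\<close> and \<open>C_t \<rightarrow> 0\<close>. Conversely, if \<open>C_t \<rightarrow> 0\<close> then the Cesaro means of
  the column sums of \<open>A^k\<close> tend to \<open>1\<close>; being almost invariant under multiplication by \<open>A\<close>,
  this forces the column sums of \<open>A\<close> to be \<open>1\<close>. Then \<open>\<parallel>A^k - J/N\<parallel>\<close> is decreasing, hence
  tends to \<open>0\<close>, so \<open>A^k\<close> is eventually positive, which gives irreducibility and aperiodicity.\<close>

section \<open>Uncorrelated observations\<close>

definition uncorrelated :: "'a measure \<Rightarrow> ('i \<Rightarrow> 'a \<Rightarrow> real) \<Rightarrow> real \<Rightarrow> bool" where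
  "uncorrelated M Y s \<longleftrightarrow>
     (\<forall>p q. integrable M (\<lambda>\<omega>. Y p \<omega> * Y q \<omega>)) \<and>
     (\<forall>p q. (\<integral>\<omega>. Y p \<omega> * Y q \<omega> \<partial>M) = (if p = q then s else 0))"

lemma uncorrelated_integral_square_sum:
  assumes Y: "uncorrelated M Y s" and J: "finite J"
  shows "integrable M (\<lambda>\<omega>. (\<Sum>p\<in>J. c p * Y p \<omega>)\<^sup>2)"
    and "(\<integral>\<omega>. (\<Sum>p\<in>J. c p * Y p \<omega>)\<^sup>2 \<partial>M) = s * (\<Sum>p\<in>J. (c p)\<^sup>2)"
proof -
  have square: "(\<lambda>\<omega>. (\<Sum>p\<in>J. c p * Y p \<omega>)\<^sup>2) =
      (\<lambda>\<omega>. \<Sum>p\<in>J. \<Sum>q\<in>J. c p * c q * (Y p \<omega> * Y q \<omega>))"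
    by (auto simp: power2_eq_square sum_product intro!: sum.cong)
  show "integrable M (\<lambda>\<omega>. (\<Sum>p\<in>J. c p * Y p \<omega>)\<^sup>2)"
    using Y unfolding square uncorrelated_def by simp
  have "(\<integral>\<omega>. (\<Sum>p\<in>J. c p * Y p \<omega>)\<^sup>2 \<partial>M) =
      (\<Sum>p\<in>J. \<Sum>q\<in>J. c p * c q * (if p = q then s else 0))"
    using Y unfolding square uncorrelated_def by (simp add: integral_sum)
  also have "\<dots> = s * (\<Sum>p\<in>J. (c p)\<^sup>2)"
    using J by (simp add: if_distrib sum_distrib_left power2_eq_square ac_simps cong: if_cong)
  finally show "(\<integral>\<omega>. (\<Sum>p\<in>J. c p * Y p \<omega>)\<^sup>2 \<partial>M) = s * (\<Sum>p\<in>J. (c p)\<^sup>2)" .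
qed

lemma (in prob_space) indep_vars_imp_indep_var:
  assumes Y: "indep_vars (\<lambda>_. borel) Y I" and "p \<in> I" "q \<in> I" "p \<noteq> q"
  shows "indep_var borel (Y p) borel (Y q)"
proof -
  have "indep_var (PiM {p} (\<lambda>_. borel)) (\<lambda>\<omega>. restrict (\<lambda>i. Y i \<omega>) {p})
                  (PiM {q} (\<lambda>_. borel)) (\<lambda>\<omega>. restrict (\<lambda>i. Y i \<omega>) {q})"
    using assms by (intro indep_var_restrict[OF Y]) auto
  then have "indep_var borel ((\<lambda>f. f p) \<circ> (\<lambda>\<omega>. restrict (\<lambda>i. Y i \<omega>) {p}))
                  borel ((\<lambda>f. f q) \<circ> (\<lambda>\<omega>. restrict (\<lambda>i. Y i \<omega>) {q}))"
    by (rule indep_var_compose) (auto intro!: measurable_component_singleton)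
  then show ?thesis
    by (simp add: comp_def)
qed

lemma (in prob_space) moments_distr:
  fixes Y :: "'a \<Rightarrow> real"
  assumes Y: "Y \<in> borel_measurable M" and distr: "distr M borel Y = D"
    and sq: "integrable D (\<lambda>x. x\<^sup>2)"
  shows "integrable M Y" and "(\<integral>\<omega>. Y \<omega> \<partial>M) = (\<integral>x. x \<partial>D)"
    and "integrable M (\<lambda>\<omega>. (Y \<omega> - c)\<^sup>2)" and "(\<integral>\<omega>. (Y \<omega> - c)\<^sup>2 \<partial>M) = (\<integral>x. (x - c)\<^sup>2 \<partial>D)"
proof -
  interpret D: prob_space D
    using prob_space_distr[OF Y] distr by simp
  have id: "integrable D (\<lambda>x. x)"
  proof (rule D.square_integrable_imp_integrable)
    have "sets D = sets borel"
      using distr by auto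
    then show "(\<lambda>x. x) \<in> borel_measurable D"
      by (rule measurable_ident_sets)
  qed (use sq in simp)
  then have "integrable D (\<lambda>x. (x - c)\<^sup>2)"
    using sq by (simp add: power2_eq_square algebra_simps)
  with id show "integrable M Y" "integrable M (\<lambda>\<omega>. (Y \<omega> - c)\<^sup>2)"
    using Y by (simp_all add: integrable_distr_eq flip: distr)
  show "(\<integral>\<omega>. Y \<omega> \<partial>M) = (\<integral>x. x \<partial>D)" "(\<integral>\<omega>. (Y \<omega> - c)\<^sup>2 \<partial>M) = (\<integral>x. (x - c)\<^sup>2 \<partial>D)"
    using Y by (simp_all add: integral_distr flip: distr)
qed

definition centered_obs :: "('n \<Rightarrow> nat \<Rightarrow> 'a \<Rightarrow> real) \<Rightarrow> real \<Rightarrow> 'n \<times> nat \<Rightarrow> 'a \<Rightarrow> real" where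
  "centered_obs X \<theta> = (\<lambda>(i, k) \<omega>. X i (Suc k) \<omega> - \<theta>)"

lemma uncorrelated_centered_obs:
  fixes X :: "'n \<Rightarrow> nat \<Rightarrow> 'a \<Rightarrow> real"
  assumes "prob_space M"
    and meas: "\<And>i t. t \<ge> 1 \<Longrightarrow> X i t \<in> borel_measurable M"
    and indep: "prob_space.indep_vars M (\<lambda>_. borel) (\<lambda>(i, t). X i t) (UNIV \<times> {1..})"
    and distr: "\<And>i t. t \<ge> 1 \<Longrightarrow> distr M borel (X i t) = D"
    and sq: "integrable D (\<lambda>x. x\<^sup>2)"
    and mean: "\<theta> = (\<integral>x. x \<partial>D)"
    and var: "\<sigma>2 = (\<integral>x. (x - \<theta>)\<^sup>2 \<partial>D)"
  shows "uncorrelated M (centered_obs X \<theta>) \<sigma>2"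
proof -
  interpret prob_space M by fact
  let ?Z = "centered_obs X \<theta>"
  have Z: "?Z (i, k) = (\<lambda>\<omega>. X i (Suc k) \<omega> - \<theta>)" for i k
    by (simp add: centered_obs_def)
  have int: "integrable M (?Z p)" and mean0: "(\<integral>\<omega>. ?Z p \<omega> \<partial>M) = 0"
    and int2: "integrable M (\<lambda>\<omega>. (?Z p \<omega>)\<^sup>2)" and second_moment: "(\<integral>\<omega>. (?Z p \<omega>)\<^sup>2 \<partial>M) = \<sigma>2" for p
  proof -
    obtain i k where p: "p = (i, k)"
      by fastforce
    have "X i (Suc k) \<in> borel_measurable M" "distr M borel (X i (Suc k)) = D"
      by (simp_all add: meas distr)
    note moments = moments_distr[OF this sq]
    show "integrable M (?Z p)" "(\<integral>\<omega>. ?Z p \<omega> \<partial>M) = 0"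
      using moments(1,2) by (simp_all add: p Z prob_space flip: mean)
    show "integrable M (\<lambda>\<omega>. (?Z p \<omega>)\<^sup>2)" "(\<integral>\<omega>. (?Z p \<omega>)\<^sup>2 \<partial>M) = \<sigma>2"
      using moments(3,4)[of \<theta>] by (simp_all add: p Z flip: var)
  qed
  define Y where "Y = (\<lambda>(i, t) \<omega>. X i t \<omega> - \<theta>)"
  have Y: "indep_vars (\<lambda>_. borel) Y (UNIV \<times> {1..})"
    unfolding Y_def using indep_vars_compose2[OF indep, of "\<lambda>_ x. x - \<theta>"]
    by (simp add: case_prod_beta')
  have shift: "?Z p = Y (fst p, Suc (snd p))" for p
    by (simp add: Y_def centered_obs_def case_prod_beta')
  have indep_pair: "indep_var borel (?Z p) borel (?Z q)" if "p \<noteq> q" for p q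
    unfolding shift using that
    by (intro indep_vars_imp_indep_var[OF Y]) (auto simp: prod_eq_iff)
  show ?thesis
    unfolding uncorrelated_def
  proof (intro allI conjI)
    fix p q
    show "integrable M (\<lambda>\<omega>. ?Z p \<omega> * ?Z q \<omega>)"
      using int2[of p] indep_var_integrable[OF indep_pair int int]
      by (cases "p = q") (auto simp: power2_eq_square)
    show "(\<integral>\<omega>. ?Z p \<omega> * ?Z q \<omega> \<partial>M) = (if p = q then \<sigma>2 else 0)"
      using second_moment[of p] indep_var_lebesgue_integral[OF indep_pair int int] mean0
      by (cases "p = q") (auto simp: power2_eq_square)
  qed
qed

section \<open>Powers of stochastic matrices\<close>

lemma mpow_add: "mpow A (m + n) = mpow A m ** mpow A n"
  by (induction m) (auto simp: matrix_mul_assoc)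

lemma mpow_Suc_right: "mpow A (Suc k) = mpow A k ** A"
  using mpow_add[of A k 1] by simp

lemma matrix_mult_entry: "((B::'a::semiring_1^'n^'m) ** C) $ i $ j = (\<Sum>p\<in>UNIV. B $ i $ p * C $ p $ j)"
  by (simp add: matrix_matrix_mult_def)

lemma stochastic_mat_1: "stochastic (mat 1)"
  by (simp add: stochastic_def mat_def)

lemma stochastic_nonneg: "stochastic B \<Longrightarrow> 0 \<le> B $ i $ j"
  by (simp add: stochastic_def)

lemma stochastic_le_1:
  assumes "stochastic B"
  shows "B $ i $ j \<le> 1"
proof -
  have "B $ i $ j \<le> (\<Sum>l\<in>UNIV. B $ i $ l)"
    using assms by (intro member_le_sum) (auto simp: stochastic_def)
  with assms show ?thesis
    by (simp add: stochastic_def)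
qed

lemma stochastic_mult:
  assumes B: "stochastic B" and C: "stochastic C"
  shows "stochastic (B ** C)"
  unfolding stochastic_def
proof safe
  show "0 \<le> (B ** C) $ i $ j" for i j
    using assms by (auto simp: stochastic_def matrix_mult_entry intro!: sum_nonneg)
  have "(\<Sum>j\<in>UNIV. (B ** C) $ i $ j) = (\<Sum>p\<in>UNIV. B $ i $ p * (\<Sum>j\<in>UNIV. C $ p $ j))" for i
    unfolding matrix_mult_entry by (subst sum.swap) (simp add: sum_distrib_left)
  with assms show "(\<Sum>j\<in>UNIV. (B ** C) $ i $ j) = 1" for i
    by (simp add: stochastic_def)
qed

lemma stochastic_mpow: "stochastic A \<Longrightarrow> stochastic (mpow A k)"
  by (induction k) (simp_all add: stochastic_mult stochastic_mat_1)

lemma stochastic_mult_one: "stochastic A \<Longrightarrow> A *v 1 = 1"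
  by (simp add: stochastic_def vec_eq_iff matrix_vector_mult_def)

lemma bistochastic_mult:
  assumes B: "bistochastic B" and C: "bistochastic C"
  shows "bistochastic (B ** C)"
proof -
  have "(\<Sum>i\<in>UNIV. (B ** C) $ i $ j) = (\<Sum>p\<in>UNIV. (\<Sum>i\<in>UNIV. B $ i $ p) * C $ p $ j)" for j
    unfolding matrix_mult_entry by (subst sum.swap) (simp add: sum_distrib_right)
  with assms show ?thesis
    by (simp add: bistochastic_def stochastic_mult)
qed

lemma bistochastic_mpow: "bistochastic A \<Longrightarrow> bistochastic (mpow A k)"
proof (induction k)
  case 0
  show ?case
    unfolding bistochastic_def mpow.simps(1) by (intro conjI allI stochastic_mat_1) (simp add: mat_def)
qed (simp add: bistochastic_mult)

lemma mpow_pos_add: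
  assumes A: "stochastic A" and "mpow A a $ i $ l > 0" and "mpow A b $ l $ j > 0"
  shows "mpow A (a + b) $ i $ j > 0"
proof -
  have "0 < mpow A a $ i $ l * mpow A b $ l $ j"
    using assms by simp
  also have "\<dots> \<le> (\<Sum>p\<in>UNIV. mpow A a $ i $ p * mpow A b $ p $ j)"
    by (rule member_le_sum[where f = "\<lambda>p. mpow A a $ i $ p * mpow A b $ p $ j"])
      (auto intro!: mult_nonneg_nonneg stochastic_nonneg stochastic_mpow A)
  finally show ?thesis
    by (simp add: mpow_add matrix_mult_entry)
qed

lemma add_closed_Gcd_eq_1_consecutive:
  fixes S :: "nat set"
  assumes zero: "0 \<in> S" and add: "\<And>a b. a \<in> S \<Longrightarrow> b \<in> S \<Longrightarrow> a + b \<in> S"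
    and gcd: "Gcd {k. k \<ge> 1 \<and> k \<in> S} = 1"
  obtains y where "y \<in> S" "y + 1 \<in> S"
proof -
  have mult: "k * s \<in> S" if "s \<in> S" for k s
    by (induction k) (use zero add that in auto)
  define gap where "gap d \<longleftrightarrow> d > 0 \<and> (\<exists>y. y \<in> S \<and> y + d \<in> S)" for d
  obtain s where "s \<in> S" "s \<ge> 1"
    using gcd by (metis (mono_tags, lifting) Gcd_empty empty_Collect_eq zero_neq_one)
  with zero have "gap s"
    unfolding gap_def by (intro conjI exI[of _ 0]) auto
  define d where "d = (LEAST d. gap d)"
  have "gap d"
    unfolding d_def by (rule LeastI) fact
  then obtain y where y: "y \<in> S" "y + d \<in> S" and "d > 0"
    unfolding gap_def by auto
  \<comment> \<open>A remainder of an element of \<open>S\<close> modulo \<open>d\<close> would be a smaller gap.\<close>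
  have "d dvd s" if "s \<in> S" for s
  proof (rule ccontr)
    assume "\<not> d dvd s"
    then have r: "0 < s mod d" "s mod d < d"
      using \<open>d > 0\<close> by (auto simp: mod_greater_zero_iff_not_dvd)
    have "(s div d) * (y + d) + s mod d = s + (s div d) * y"
      by (simp add: algebra_simps)
    moreover have "(s div d) * (y + d) \<in> S" "s + (s div d) * y \<in> S"
      using add mult that y by auto
    ultimately have "gap (s mod d)"
      unfolding gap_def using r by metis
    then have "d \<le> s mod d"
      unfolding d_def by (rule Least_le)
    with r show False
      by simp
  qed
  then have "d dvd Gcd {k. k \<ge> 1 \<and> k \<in> S}"
    by (intro Gcd_greatest) auto
  with gcd y that show ?thesis
    by simp
qed

lemma add_closed_consecutive_cofinite:
  fixes S :: "nat set"
  assumes zero: "0 \<in> S" and add: "\<And>a b. a \<in> S \<Longrightarrow> b \<in> S \<Longrightarrow> a + b \<in> S"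
    and y: "y \<in> S" "y + 1 \<in> S" and n: "y * y \<le> n"
  shows "n \<in> S"
proof -
  have mult: "k * s \<in> S" if "s \<in> S" for k s
    by (induction k) (use zero add that in auto)
  show ?thesis
  proof (cases "y = 0")
    case True
    with mult y show ?thesis
      by (metis add_0 mult.right_neutral)
  next
    case False
    then have "n mod y < y" "y \<le> n div y"
      using n div_le_mono[of "y * y" n y] by auto
    then obtain e where e: "n div y = n mod y + e"
      using le_Suc_ex by (metis less_imp_le_nat order.trans)
    have "n = (n div y) * y + n mod y"
      by simp
    also have "\<dots> = e * y + (n mod y) * (y + 1)"
      by (simp add: e algebra_simps)
    finally show ?thesis
      using add mult y by metis
  qed
qed

lemma primitive_if_irreducible_aperiodic:
  assumes A: "stochastic A" and irr: "irreducible_mat A" and ap: "aperiodic_mat A"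
  obtains m where "\<And>i j. mpow A m $ i $ j > 0"
proof -
  have "\<exists>K. \<forall>n\<ge>K. mpow A n $ i $ i > 0" for i
  proof -
    let ?S = "{k. mpow A k $ i $ i > 0}"
    have zero: "0 \<in> ?S"
      by (simp add: mat_def)
    have add: "a + b \<in> ?S" if "a \<in> ?S" "b \<in> ?S" for a b
      using mpow_pos_add[OF A, of a i i b i] that by simp
    obtain y where "y \<in> ?S" "y + 1 \<in> ?S"
      using add_closed_Gcd_eq_1_consecutive[OF zero add] ap
      by (auto simp: aperiodic_mat_def period_at_def)
    with add_closed_consecutive_cofinite[OF zero add] show ?thesis
      by blast
  qed
  then obtain K where K: "\<And>i n. n \<ge> K i \<Longrightarrow> mpow A n $ i $ i > 0"
    by metis
  have "\<exists>d. mpow A d $ i $ j > 0" for i j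
    using irr stochastic_nonneg[OF stochastic_mpow[OF A]]
    by (metis irreducible_mat_def order_le_less)
  then obtain d where d: "\<And>i j. mpow A (d i j) $ i $ j > 0"
    by metis
  \<comment> \<open>From \<open>i\<close>, loop at \<open>i\<close> for \<open>m - d i j \<ge> K i\<close> steps, then go to \<open>j\<close> in \<open>d i j\<close> steps.\<close>
  define m where "m = (\<Sum>i\<in>UNIV. K i) + (\<Sum>i\<in>UNIV. \<Sum>j\<in>UNIV. d i j)"
  have "mpow A m $ i $ j > 0" for i j
  proof -
    have "K i \<le> (\<Sum>i\<in>UNIV. K i)" "d i j \<le> (\<Sum>i\<in>UNIV. \<Sum>j\<in>UNIV. d i j)"
      using member_le_sum[of i UNIV K] member_le_sum[of j UNIV "d i"]
        member_le_sum[of i UNIV "\<lambda>i. \<Sum>j\<in>UNIV. d i j"] by auto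
    then have "K i \<le> m - d i j" "m = (m - d i j) + d i j"
      unfolding m_def by linarith+
    then show ?thesis
      using mpow_pos_add[OF A K d] by metis
  qed
  with that show ?thesis .
qed

lemma irreducible_aperiodic_if_eventually_pos:
  assumes pos: "\<And>k i j. k \<ge> K \<Longrightarrow> mpow A k $ i $ j > 0"
  shows "irreducible_mat A" and "aperiodic_mat A"
proof -
  show "irreducible_mat A"
    unfolding irreducible_mat_def using pos[of K] by (metis less_irrefl order_refl)
  have "period_at A i dvd Suc K" "period_at A i dvd Suc (Suc K)" for i
    unfolding period_at_def by (auto intro!: Gcd_dvd pos)
  then have "period_at A i dvd 1" for i
    using dvd_diff_nat[of "period_at A i" "Suc (Suc K)" "Suc K"] by simp
  then show "aperiodic_mat A"
    by (simp add: aperiodic_mat_def)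
qed

section \<open>Distance of the powers to the uniform matrix\<close>

lemma weighted_sum_square_le:
  fixes c w :: "'i \<Rightarrow> real"
  assumes c: "\<And>p. p \<in> S \<Longrightarrow> c p \<ge> 0"
  shows "(\<Sum>p\<in>S. c p * w p)\<^sup>2 \<le> (\<Sum>p\<in>S. c p) * (\<Sum>p\<in>S. c p * (w p)\<^sup>2)"
proof -
  have "(\<Sum>p\<in>S. c p * w p)\<^sup>2 = (\<Sum>p\<in>S. sqrt (c p) * (sqrt (c p) * w p))\<^sup>2"
    using c by (simp add: mult.assoc[symmetric] cong: sum.cong)
  also have "\<dots> \<le> (\<Sum>p\<in>S. (sqrt (c p))\<^sup>2) * (\<Sum>p\<in>S. (sqrt (c p) * w p)\<^sup>2)"
    by (rule Cauchy_Schwarz_ineq_sum)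
  also have "\<dots> = (\<Sum>p\<in>S. c p) * (\<Sum>p\<in>S. c p * (w p)\<^sup>2)"
    using c by (simp add: power_mult_distrib cong: sum.cong)
  finally show ?thesis .
qed

definition frobenius_sq :: "real^'n^'n \<Rightarrow> real" where
  "frobenius_sq B = (\<Sum>i\<in>UNIV. \<Sum>l\<in>UNIV. (B $ i $ l)\<^sup>2)"

text \<open>\<open>\<parallel>B - J/N\<parallel>\<^sup>2\<close>, with \<open>J\<close> the all-ones matrix: \<open>J/N\<close> is the limit of the powers of a
  primitive bistochastic matrix.\<close>
definition dist_uniform_sq :: "real^'n^'n \<Rightarrow> real" where
  "dist_uniform_sq B = (\<Sum>i\<in>UNIV. \<Sum>l\<in>UNIV. (B $ i $ l - 1 / real CARD('n))\<^sup>2)"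

lemma dist_uniform_sq_nonneg: "dist_uniform_sq B \<ge> 0"
  unfolding dist_uniform_sq_def by (intro sum_nonneg) auto

lemma dist_uniform_sq_eq:
  fixes B :: "real^'n^'n"
  assumes "stochastic B"
  shows "dist_uniform_sq B = frobenius_sq B - 1"
proof -
  let ?N = "real CARD('n)"
  have "dist_uniform_sq B =
      (\<Sum>i\<in>UNIV. \<Sum>l\<in>UNIV. (B $ i $ l)\<^sup>2 - 2 / ?N * B $ i $ l + 1 / ?N\<^sup>2)"
    unfolding dist_uniform_sq_def by (intro sum.cong refl) (simp add: power2_eq_square field_simps)
  also have "\<dots> =
      (\<Sum>i\<in>UNIV. (\<Sum>l\<in>UNIV. (B $ i $ l)\<^sup>2) - 2 / ?N * (\<Sum>l\<in>UNIV. B $ i $ l) + ?N / ?N\<^sup>2)"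
    by (simp add: sum.distrib sum_subtractf sum_distrib_left)
  also have "\<dots> = (\<Sum>i\<in>UNIV. (\<Sum>l\<in>UNIV. (B $ i $ l)\<^sup>2) - 1 / ?N)"
    using assms by (intro sum.cong refl) (simp add: stochastic_def power2_eq_square field_simps)
  also have "\<dots> = frobenius_sq B - 1"
    by (simp add: frobenius_sq_def sum_subtractf)
  finally show ?thesis .
qed

text \<open>Writing \<open>B = C + \<delta> J\<close> with \<open>C \<ge> 0\<close>, the part \<open>\<delta> J\<close> annihilates \<open>w\<close>, and \<open>C\<close> has
  all row and column sums \<open>1 - N \<delta>\<close>.\<close>
lemma bistochastic_contraction:
  fixes B :: "real^'n^'n"
  assumes B: "bistochastic B" and \<delta>: "\<And>i j. \<delta> \<le> B $ i $ j" and w: "(\<Sum>p\<in>UNIV. w p) = 0"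
  shows "(\<Sum>i\<in>UNIV. (\<Sum>p\<in>UNIV. B $ i $ p * w p)\<^sup>2) \<le>
    (1 - real CARD('n) * \<delta>)\<^sup>2 * (\<Sum>p\<in>UNIV. (w p)\<^sup>2)"
proof -
  define r where "r = 1 - real CARD('n) * \<delta>"
  define c where "c i p = B $ i $ p - \<delta>" for i p
  have c: "c i p \<ge> 0" for i p
    using \<delta> by (simp add: c_def)
  have row: "(\<Sum>p\<in>UNIV. c i p) = r" and col: "(\<Sum>i\<in>UNIV. c i p) = r" for i p
    using B by (simp_all add: c_def r_def sum_subtractf bistochastic_def stochastic_def)
  have Bw: "(\<Sum>p\<in>UNIV. B $ i $ p * w p) = (\<Sum>p\<in>UNIV. c i p * w p)" for i
    using w by (simp add: c_def left_diff_distrib sum_subtractf flip: sum_distrib_left)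
  have "(\<Sum>p\<in>UNIV. c i p * w p)\<^sup>2 \<le> r * (\<Sum>p\<in>UNIV. c i p * (w p)\<^sup>2)" for i
    using weighted_sum_square_le[of UNIV "c i" w] c row[of i] by simp
  then have "(\<Sum>i\<in>UNIV. (\<Sum>p\<in>UNIV. B $ i $ p * w p)\<^sup>2) \<le> (\<Sum>i\<in>UNIV. r * (\<Sum>p\<in>UNIV. c i p * (w p)\<^sup>2))"
    unfolding Bw by (intro sum_mono)
  also have "\<dots> = r * (\<Sum>i\<in>UNIV. \<Sum>p\<in>UNIV. c i p * (w p)\<^sup>2)"
    by (simp add: sum_distrib_left)
  also have "\<dots> = r * (\<Sum>p\<in>UNIV. (\<Sum>i\<in>UNIV. c i p) * (w p)\<^sup>2)"
    by (subst sum.swap) (simp add: sum_distrib_right)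
  also have "\<dots> = r\<^sup>2 * (\<Sum>p\<in>UNIV. (w p)\<^sup>2)"
    by (simp add: col sum_distrib_left power2_eq_square mult.assoc)
  finally show ?thesis
    by (simp add: r_def)
qed

lemma dist_uniform_sq_mult_le:
  fixes B C :: "real^'n^'n"
  assumes B: "bistochastic B" and C: "bistochastic C" and \<delta>: "\<And>i j. \<delta> \<le> B $ i $ j"
  shows "dist_uniform_sq (B ** C) \<le> (1 - real CARD('n) * \<delta>)\<^sup>2 * dist_uniform_sq C"
proof -
  let ?N = "real CARD('n)"
  let ?w = "\<lambda>l p. C $ p $ l - 1 / ?N"
  have entry: "(B ** C) $ i $ l - 1 / ?N = (\<Sum>p\<in>UNIV. B $ i $ p * ?w l p)" for i l
    using B by (simp add: matrix_mult_entry right_diff_distrib sum_subtractf bistochastic_def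
        stochastic_def flip: sum_distrib_left sum_divide_distrib)
  have w: "(\<Sum>p\<in>UNIV. ?w l p) = 0" for l
    using C by (simp add: sum_subtractf bistochastic_def)
  have "dist_uniform_sq (B ** C) = (\<Sum>l\<in>UNIV. \<Sum>i\<in>UNIV. (\<Sum>p\<in>UNIV. B $ i $ p * ?w l p)\<^sup>2)"
    unfolding dist_uniform_sq_def entry by (rule sum.swap)
  also have "\<dots> \<le> (\<Sum>l\<in>UNIV. (1 - ?N * \<delta>)\<^sup>2 * (\<Sum>p\<in>UNIV. (?w l p)\<^sup>2))"
    by (intro sum_mono bistochastic_contraction[OF B \<delta> w])
  also have "\<dots> = (1 - ?N * \<delta>)\<^sup>2 * dist_uniform_sq C"
    unfolding dist_uniform_sq_def sum_distrib_left[symmetric] by (subst (2) sum.swap) (rule refl)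
  finally show ?thesis .
qed

lemma decseq_dist_uniform_sq_mpow:
  assumes A: "bistochastic A"
  shows "decseq (\<lambda>k. dist_uniform_sq (mpow A k))"
proof (rule decseq_SucI)
  fix k
  have "dist_uniform_sq (A ** mpow A k) \<le> (1 - real CARD('a) * 0)\<^sup>2 * dist_uniform_sq (mpow A k)"
    using A by (intro dist_uniform_sq_mult_le bistochastic_mpow)
      (auto simp: bistochastic_def stochastic_def)
  then show "dist_uniform_sq (mpow A (Suc k)) \<le> dist_uniform_sq (mpow A k)"
    by simp
qed

lemma dist_uniform_sq_mpow_tendsto_0:
  fixes A :: "real^'n^'n"
  assumes A: "bistochastic A" and irr: "irreducible_mat A" and ap: "aperiodic_mat A"
  shows "(\<lambda>k. dist_uniform_sq (mpow A k)) \<longlonglongrightarrow> 0"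
proof -
  let ?N = "real CARD('n)"
  let ?H = "\<lambda>k. dist_uniform_sq (mpow A k)"
  have st: "stochastic A"
    using A by (simp add: bistochastic_def)
  obtain m where pos: "\<And>i j. mpow A m $ i $ j > 0"
    using primitive_if_irreducible_aperiodic[OF st irr ap] by blast
  define \<delta> where "\<delta> = Min (range (\<lambda>(i, j). mpow A m $ i $ j))"
  have \<delta>_pos: "\<delta> > 0"
    unfolding \<delta>_def using pos by (subst Min_gr_iff) auto
  have \<delta>_le: "\<delta> \<le> mpow A m $ i $ j" for i j
    unfolding \<delta>_def by (rule Min_le) auto
  have "?N * \<delta> \<le> (\<Sum>j\<in>UNIV. mpow A m $ i $ j)" for i
    using sum_mono[of UNIV "\<lambda>_. \<delta>" "\<lambda>j. mpow A m $ i $ j"] \<delta>_le by simp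
  then have "?N * \<delta> \<le> 1"
    using stochastic_mpow[OF st, of m] by (simp add: stochastic_def)
  moreover have "?N * \<delta> > 0"
    using \<delta>_pos by simp
  ultimately have q: "0 \<le> (1 - ?N * \<delta>)\<^sup>2" "(1 - ?N * \<delta>)\<^sup>2 < 1"
    by (simp_all add: power2_less_1_iff)
  have contract: "?H (k + m) \<le> (1 - ?N * \<delta>)\<^sup>2 * ?H k" for k
    unfolding add.commute[of k] mpow_add
    using A \<delta>_le by (intro dist_uniform_sq_mult_le bistochastic_mpow)
  obtain L where L: "?H \<longlonglongrightarrow> L"
    using decseq_convergent[OF decseq_dist_uniform_sq_mpow[OF A], of 0] dist_uniform_sq_nonneg
    by blast
  have "L \<ge> 0"
    by (rule LIMSEQ_le_const[OF L]) (simp add: dist_uniform_sq_nonneg)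
  moreover have "L \<le> (1 - ?N * \<delta>)\<^sup>2 * L"
    using contract
    by (intro LIMSEQ_le[OF LIMSEQ_ignore_initial_segment[OF L, of m] tendsto_mult_left[OF L]]) auto
  ultimately have "L = 0"
    using q by (auto simp: mult_le_cancel_right1)
  with L show ?thesis
    by simp
qed

lemma column_sum_dev_sq_le:
  fixes B :: "real^'n^'n"
  shows "((\<Sum>i\<in>UNIV. B $ i $ l) - 1)\<^sup>2 \<le> real CARD('n) * dist_uniform_sq B"
proof -
  let ?N = "real CARD('n)"
  have "((\<Sum>i\<in>UNIV. B $ i $ l) - 1)\<^sup>2 = (\<Sum>i\<in>UNIV. B $ i $ l - 1 / ?N)\<^sup>2"
    by (simp add: sum_subtractf)
  also have "\<dots> \<le> ?N * (\<Sum>i\<in>UNIV. (B $ i $ l - 1 / ?N)\<^sup>2)"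
    using sum_squared_le_sum_of_squares[of "\<lambda>i. B $ i $ l - 1 / ?N" UNIV] by (simp add: mult.commute)
  also have "\<dots> \<le> ?N * dist_uniform_sq B"
    unfolding dist_uniform_sq_def
    by (intro mult_left_mono sum_mono member_le_sum[where f = "\<lambda>l. (B $ _ $ l - 1 / ?N)\<^sup>2"]) auto
  finally show ?thesis .
qed

lemma entry_pos_if_dist_uniform_sq_less:
  fixes B :: "real^'n^'n"
  assumes "dist_uniform_sq B < 1 / (real CARD('n))\<^sup>2"
  shows "B $ i $ l > 0"
proof (rule ccontr)
  let ?N = "real CARD('n)"
  assume "\<not> B $ i $ l > 0"
  then have "(1 / ?N)\<^sup>2 \<le> (1 / ?N - B $ i $ l)\<^sup>2"
    by (intro power_mono) auto
  also have "\<dots> = (B $ i $ l - 1 / ?N)\<^sup>2"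
    by (rule power2_commute)
  also have "\<dots> \<le> (\<Sum>l'\<in>UNIV. (B $ i $ l' - 1 / ?N)\<^sup>2)"
    by (rule member_le_sum[where f = "\<lambda>l'. (B $ i $ l' - 1 / ?N)\<^sup>2"]) auto
  also have "\<dots> \<le> dist_uniform_sq B"
    unfolding dist_uniform_sq_def
    by (rule member_le_sum[where f = "\<lambda>i. \<Sum>l'\<in>UNIV. (B $ i $ l' - 1 / ?N)\<^sup>2"])
      (auto intro: sum_nonneg)
  finally show False
    using assms by (simp add: power_divide)
qed

section \<open>Cesaro means\<close>

definition cesaro_mean :: "(nat \<Rightarrow> real) \<Rightarrow> nat \<Rightarrow> real" where
  "cesaro_mean f t = (\<Sum>k<Suc t. f k) / real (Suc t)"

lemma cesaro_mean_tendsto_0: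
  assumes f: "f \<longlonglongrightarrow> 0"
  shows "cesaro_mean f \<longlonglongrightarrow> 0"
proof (rule LIMSEQ_I)
  fix e :: real
  assume "e > 0"
  then obtain K where K: "\<And>k. k \<ge> K \<Longrightarrow> \<bar>f k\<bar> < e / 2"
    using LIMSEQ_D[OF f, of "e / 2"] by auto
  define B where "B = (\<Sum>k<K. \<bar>f k\<bar>)"
  obtain T where T: "2 * B / e < real T"
    using reals_Archimedean2 by blast
  have "\<bar>cesaro_mean f t\<bar> < e" if t: "t \<ge> K + T" for t
  proof -
    have "\<bar>\<Sum>k<Suc t. f k\<bar> \<le> (\<Sum>k<Suc t. \<bar>f k\<bar>)"
      by (rule sum_abs)
    also have "\<dots> = B + (\<Sum>k\<in>{K..<Suc t}. \<bar>f k\<bar>)"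
      unfolding B_def using sum.atLeastLessThan_concat[of 0 K "Suc t" "\<lambda>k. \<bar>f k\<bar>"] t
      by (simp add: atLeast0LessThan del: sum.lessThan_Suc)
    also have "\<dots> \<le> B + (\<Sum>k\<in>{K..<Suc t}. e / 2)"
      using K by (intro add_left_mono sum_mono less_imp_le) auto
    also have "\<dots> \<le> B + real (Suc t) * (e / 2)"
      using \<open>e > 0\<close> by simp
    also have "\<dots> < real (Suc t) * e"
    proof -
      have "2 * B < e * real T"
        using T \<open>e > 0\<close> by (simp add: field_simps)
      also have "\<dots> \<le> e * real t"
        using t \<open>e > 0\<close> by (intro mult_left_mono) auto
      finally show ?thesis
        using \<open>e > 0\<close> by (simp add: field_simps)
    qed
    finally show ?thesis
      by (simp add: cesaro_mean_def field_simps del: of_nat_Suc)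
  qed
  then show "\<exists>T. \<forall>t\<ge>T. norm (cesaro_mean f t - 0) < e"
    by auto
qed

lemma le_cesaro_mean_if_decseq:
  assumes "decseq f"
  shows "f t \<le> cesaro_mean f t"
proof -
  have "real (Suc t) * f t \<le> (\<Sum>k<Suc t. f k)"
    using sum_mono[of "{..<Suc t}" "\<lambda>_. f t" f] decseqD[OF assms] by simp
  then show ?thesis
    by (simp add: cesaro_mean_def field_simps del: of_nat_Suc)
qed

lemma cesaro_mean_sq_le: "(cesaro_mean f t)\<^sup>2 \<le> cesaro_mean (\<lambda>k. (f k)\<^sup>2) t"
proof -
  have "(\<Sum>k<Suc t. f k)\<^sup>2 \<le> real (Suc t) * (\<Sum>k<Suc t. (f k)\<^sup>2)"
    using sum_squared_le_sum_of_squares[of f "{..<Suc t}"] by (simp add: mult.commute)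
  then show ?thesis
    unfolding cesaro_mean_def
    by (simp add: power_divide field_simps power2_eq_square del: of_nat_Suc sum.lessThan_Suc)
qed

lemma cesaro_mean_shift_diff_tendsto_0:
  assumes bound: "\<And>k. \<bar>g k\<bar> \<le> C"
  shows "(\<lambda>t. cesaro_mean (\<lambda>k. g (Suc k)) t - cesaro_mean g t) \<longlonglongrightarrow> 0"
proof -
  have "(\<Sum>k<Suc t. g (Suc k)) = (\<Sum>k<Suc t. g k) + g (Suc t) - g 0" for t
    using sum.lessThan_Suc_shift[of g "Suc t"] sum.lessThan_Suc[of g "Suc t"] by simp
  then have diff: "cesaro_mean (\<lambda>k. g (Suc k)) t - cesaro_mean g t = (g (Suc t) - g 0) / real (Suc t)" for t
    unfolding cesaro_mean_def by (simp add: diff_divide_distrib add_divide_distrib)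
  show ?thesis
    unfolding diff
  proof (rule Lim_null_comparison[OF always_eventually])
    have "\<bar>g (Suc t) - g 0\<bar> \<le> 2 * C" for t
      using bound[of "Suc t"] bound[of 0] by linarith
    then show "\<forall>t. norm ((g (Suc t) - g 0) / real (Suc t)) \<le> 2 * C * inverse (real (Suc t))"
      by (simp add: divide_inverse abs_mult del: of_nat_Suc)
    show "(\<lambda>t. 2 * C * inverse (real (Suc t))) \<longlonglongrightarrow> 0"
      using tendsto_mult_left[OF LIMSEQ_inverse_real_of_nat, of "2 * C"] by simp
  qed
qed

lemma cesaro_column_sum_mpow_tendsto_1:
  fixes A :: "real^'n^'n"
  assumes lim: "cesaro_mean (\<lambda>k. dist_uniform_sq (mpow A k)) \<longlonglongrightarrow> 0"
  shows "cesaro_mean (\<lambda>k. \<Sum>i\<in>UNIV. mpow A k $ i $ l) \<longlonglongrightarrow> 1"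
proof -
  let ?N = "real CARD('n)"
  let ?d = "\<lambda>k. (\<Sum>i\<in>UNIV. mpow A k $ i $ l) - 1"
  have "(\<lambda>t. (cesaro_mean ?d t)\<^sup>2) \<longlonglongrightarrow> 0"
  proof (rule Lim_null_comparison[OF always_eventually])
    have "cesaro_mean (\<lambda>k. (?d k)\<^sup>2) t \<le> ?N * cesaro_mean (\<lambda>k. dist_uniform_sq (mpow A k)) t" for t
      unfolding cesaro_mean_def sum_distrib_left times_divide_eq_right
      by (intro divide_right_mono sum_mono column_sum_dev_sq_le) simp
    then show "\<forall>t. norm ((cesaro_mean ?d t)\<^sup>2) \<le> ?N * cesaro_mean (\<lambda>k. dist_uniform_sq (mpow A k)) t"
      using cesaro_mean_sq_le[of ?d] by (auto intro: order_trans)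
    show "(\<lambda>t. ?N * cesaro_mean (\<lambda>k. dist_uniform_sq (mpow A k)) t) \<longlonglongrightarrow> 0"
      using tendsto_mult_left[OF lim, of ?N] by simp
  qed
  then have "(\<lambda>t. \<bar>cesaro_mean ?d t\<bar>) \<longlonglongrightarrow> 0"
    using tendsto_real_sqrt by fastforce
  moreover have "cesaro_mean ?d t = cesaro_mean (\<lambda>k. \<Sum>i\<in>UNIV. mpow A k $ i $ l) t - 1" for t
    by (simp add: cesaro_mean_def sum_subtractf field_simps del: of_nat_Suc)
  ultimately show ?thesis
    by (simp add: tendsto_rabs_zero_iff LIM_zero_iff)
qed

text \<open>The Cesaro means of the column sums of \<open>A\<^sup>k\<close> tend to \<open>1\<close>, and multiplying them by \<open>A\<close>
  shifts them by one step, which changes them only by \<open>O(1/t)\<close>.\<close>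
lemma bistochastic_if_cesaro_dist_uniform_sq_tendsto_0:
  fixes A :: "real^'n^'n"
  assumes A: "stochastic A"
    and lim: "cesaro_mean (\<lambda>k. dist_uniform_sq (mpow A k)) \<longlonglongrightarrow> 0"
  shows "bistochastic A"
proof -
  define u where "u k l = (\<Sum>i\<in>UNIV. mpow A k $ i $ l)" for k l
  have mean_u: "cesaro_mean (\<lambda>k. u k l) \<longlonglongrightarrow> 1" for l
    unfolding u_def by (rule cesaro_column_sum_mpow_tendsto_1[OF lim])
  have u_Suc: "u (Suc k) l = (\<Sum>p\<in>UNIV. u k p * A $ p $ l)" for k l
    unfolding u_def mpow_Suc_right matrix_mult_entry sum_distrib_right by (rule sum.swap)
  have "0 \<le> u k l" "u k l \<le> real CARD('n)" for k l
    unfolding u_def using stochastic_mpow[OF A, of k]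
    by (auto intro!: sum_nonneg stochastic_nonneg
        order_trans[OF sum_mono[of UNIV _ "\<lambda>_. 1"] eq_refl] stochastic_le_1)
  then have "\<bar>u k l\<bar> \<le> real CARD('n)" for k l
    by (metis abs_of_nonneg)
  then have "(\<lambda>t. cesaro_mean (\<lambda>k. u k l) t + (cesaro_mean (\<lambda>k. u (Suc k) l) t - cesaro_mean (\<lambda>k. u k l) t))
      \<longlonglongrightarrow> 1 + 0" for l
    by (intro tendsto_add mean_u cesaro_mean_shift_diff_tendsto_0)
  then have "(\<lambda>t. \<Sum>p\<in>UNIV. cesaro_mean (\<lambda>k. u k p) t * A $ p $ l) \<longlonglongrightarrow> 1" for l
    by (simp add: u_Suc cesaro_mean_def sum_divide_distrib sum_distrib_right sum.swap[of _ UNIV]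
        del: of_nat_Suc sum.lessThan_Suc)
  moreover have "(\<lambda>t. \<Sum>p\<in>UNIV. cesaro_mean (\<lambda>k. u k p) t * A $ p $ l) \<longlonglongrightarrow> (\<Sum>p\<in>UNIV. 1 * A $ p $ l)" for l
    by (intro tendsto_sum tendsto_mult mean_u tendsto_const)
  ultimately have "(\<Sum>p\<in>UNIV. A $ p $ l) = 1" for l
    using LIMSEQ_unique by fastforce
  with A show ?thesis
    by (simp add: bistochastic_def)
qed

lemma cesaro_dist_uniform_sq_tendsto_0_iff:
  fixes A :: "real^'n^'n"
  assumes A: "stochastic A"
  shows "cesaro_mean (\<lambda>k. dist_uniform_sq (mpow A k)) \<longlonglongrightarrow> 0 \<longleftrightarrow>
    irreducible_mat A \<and> aperiodic_mat A \<and> bistochastic A"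
proof
  let ?H = "\<lambda>k. dist_uniform_sq (mpow A k)"
  assume lim: "cesaro_mean ?H \<longlonglongrightarrow> 0"
  have bi: "bistochastic A"
    by (rule bistochastic_if_cesaro_dist_uniform_sq_tendsto_0[OF A lim])
  have "?H \<longlonglongrightarrow> 0"
    using le_cesaro_mean_if_decseq[OF decseq_dist_uniform_sq_mpow[OF bi]]
    by (intro Lim_null_comparison[OF always_eventually lim])
      (simp add: abs_of_nonneg[OF dist_uniform_sq_nonneg])
  then obtain K where "\<And>k. k \<ge> K \<Longrightarrow> ?H k < 1 / (real CARD('n))\<^sup>2"
    using LIMSEQ_D[of ?H 0 "1 / (real CARD('n))\<^sup>2"] by force
  then have "\<And>k i j. k \<ge> K \<Longrightarrow> mpow A k $ i $ j > 0"
    by (rule entry_pos_if_dist_uniform_sq_less)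
  with bi show "irreducible_mat A \<and> aperiodic_mat A \<and> bistochastic A"
    using irreducible_aperiodic_if_eventually_pos by blast
next
  assume "irreducible_mat A \<and> aperiodic_mat A \<and> bistochastic A"
  then show "cesaro_mean (\<lambda>k. dist_uniform_sq (mpow A k)) \<longlonglongrightarrow> 0"
    by (intro cesaro_mean_tendsto_0 dist_uniform_sq_mpow_tendsto_0) auto
qed

section \<open>The performance ratio\<close>

lemma norm_sq_vec_eq_sum: "(norm (v :: real^'n))\<^sup>2 = (\<Sum>i\<in>UNIV. (v $ i)\<^sup>2)"
  unfolding power2_norm_eq_inner inner_vec_def by (simp add: power2_eq_square)

lemma theta_hat_error_eq:
  fixes A :: "real^'n^'n" and X :: "'n \<Rightarrow> nat \<Rightarrow> 'a \<Rightarrow> real"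
  assumes A: "stochastic A"
  shows "real (Suc t) *\<^sub>R (theta_hat A X (Suc t) \<omega> - \<theta> *\<^sub>R 1) =
    (\<Sum>k<Suc t. mpow A (t - k) *v (obs_vec X (Suc k) \<omega> - \<theta> *\<^sub>R 1))"
proof (induction t)
  case (Suc t)
  let ?Y = "\<lambda>k. obs_vec X (Suc k) \<omega> - \<theta> *\<^sub>R (1::real^'n)"
  have "real (Suc (Suc t)) *\<^sub>R (theta_hat A X (Suc (Suc t)) \<omega> - \<theta> *\<^sub>R 1)
      = A *v (real (Suc t) *\<^sub>R (theta_hat A X (Suc t) \<omega> - \<theta> *\<^sub>R 1)) + ?Y (Suc t)"
    using stochastic_mult_one[OF A]
    by (simp add: matrix_vector_mult_scaleR algebra_simps del: of_nat_Suc) (simp add: vec_eq_iff algebra_simps)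
  also have "\<dots> = (\<Sum>k<Suc t. A *v (mpow A (t - k) *v ?Y k)) + ?Y (Suc t)"
    by (simp only: Suc.IH linear_sum[OF matrix_vector_mul_linear])
  also have "\<dots> = (\<Sum>k<Suc t. mpow A (Suc t - k) *v ?Y k) + ?Y (Suc t)"
    by (auto simp: matrix_vector_mul_assoc Suc_diff_le simp del: sum.lessThan_Suc intro!: sum.cong)
  also have "\<dots> = (\<Sum>k<Suc (Suc t). mpow A (Suc t - k) *v ?Y k)"
    by simp
  finally show ?case .
qed simp

lemma integral_theta_hat_error_sq:
  fixes A :: "real^'n^'n" and X :: "'n \<Rightarrow> nat \<Rightarrow> 'a \<Rightarrow> real"
  assumes Z: "uncorrelated M (centered_obs X \<theta>) s" and A: "stochastic A"
  shows "(\<integral>\<omega>. (norm (theta_hat A X (Suc t) \<omega> - \<theta> *\<^sub>R 1))\<^sup>2 \<partial>M) =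
    s / (real (Suc t))\<^sup>2 * (\<Sum>k<Suc t. frobenius_sq (mpow A k))"
proof -
  let ?J = "(UNIV :: 'n set) \<times> {..<Suc t}"
  let ?Z = "centered_obs X \<theta>"
  define c where "c i = (\<lambda>(j, k). mpow A (t - k) $ i $ j / real (Suc t))" for i
  have component: "(theta_hat A X (Suc t) \<omega> - \<theta> *\<^sub>R 1) $ i = (\<Sum>p\<in>?J. c i p * ?Z p \<omega>)" for i \<omega>
  proof -
    have "theta_hat A X (Suc t) \<omega> - \<theta> *\<^sub>R 1 = inverse (real (Suc t)) *\<^sub>R
        (\<Sum>k<Suc t. mpow A (t - k) *v (obs_vec X (Suc k) \<omega> - \<theta> *\<^sub>R 1))"
      unfolding theta_hat_error_eq[OF A, symmetric] by (simp del: of_nat_Suc)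
    then have "(theta_hat A X (Suc t) \<omega> - \<theta> *\<^sub>R 1) $ i =
        (\<Sum>k<Suc t. \<Sum>j\<in>UNIV. c i (j, k) * ?Z (j, k) \<omega>)"
      by (simp add: c_def matrix_vector_mult_def obs_vec_def centered_obs_def sum_distrib_left
          divide_inverse ac_simps del: of_nat_Suc sum.lessThan_Suc)
    then show ?thesis
      unfolding sum.cartesian_product' by (subst sum.swap) simp
  qed
  have "(\<integral>\<omega>. (norm (theta_hat A X (Suc t) \<omega> - \<theta> *\<^sub>R 1))\<^sup>2 \<partial>M) =
      (\<Sum>i\<in>UNIV. \<integral>\<omega>. (\<Sum>p\<in>?J. c i p * ?Z p \<omega>)\<^sup>2 \<partial>M)"
    unfolding norm_sq_vec_eq_sum component
    by (simp add: integral_sum uncorrelated_integral_square_sum(1)[OF Z])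
  also have "\<dots> = (\<Sum>i\<in>UNIV. s * (\<Sum>p\<in>?J. (c i p)\<^sup>2))"
    by (simp add: uncorrelated_integral_square_sum(2)[OF Z])
  also have "\<dots> = s / (real (Suc t))\<^sup>2 * (\<Sum>i\<in>UNIV. \<Sum>j\<in>UNIV. \<Sum>k<Suc t. (mpow A (t - k) $ i $ j)\<^sup>2)"
    by (simp add: c_def sum.cartesian_product' power_divide sum_distrib_left sum_divide_distrib
        del: of_nat_Suc sum.lessThan_Suc)
  also have "(\<Sum>i\<in>UNIV. \<Sum>j\<in>UNIV. \<Sum>k<Suc t. (mpow A (t - k) $ i $ j)\<^sup>2) =
      (\<Sum>k<Suc t. frobenius_sq (mpow A (t - k)))"
    unfolding frobenius_sq_def by (simp only: sum.swap[where B = "{..<Suc t}"])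
  also have "(\<Sum>k<Suc t. frobenius_sq (mpow A (t - k))) = (\<Sum>k<Suc t. frobenius_sq (mpow A k))"
    using sum.nat_diff_reindex[of "\<lambda>k. frobenius_sq (mpow A k)" "Suc t"] by simp
  finally show ?thesis .
qed

lemma integral_grand_mean_error_sq:
  fixes X :: "'n::finite \<Rightarrow> nat \<Rightarrow> 'a \<Rightarrow> real"
  assumes Z: "uncorrelated M (centered_obs X \<theta>) s"
  shows "(\<integral>\<omega>. (norm ((grand_mean X (Suc t) \<omega> - \<theta>) *\<^sub>R (1::real^'n)))\<^sup>2 \<partial>M) = s / real (Suc t)"
proof -
  let ?J = "(UNIV :: 'n set) \<times> {..<Suc t}"
  let ?n = "real CARD('n) * real (Suc t)"
  have card_J: "real (card ?J) = ?n"
    by (simp add: card_cartesian_product algebra_simps)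
  have "(\<Sum>p\<in>?J. 1 / ?n * centered_obs X \<theta> p \<omega>) =
      1 / ?n * ((\<Sum>i\<in>UNIV. \<Sum>k<Suc t. X i (Suc k) \<omega>) - ?n * \<theta>)" for \<omega>
    unfolding sum.cartesian_product'
    by (simp add: centered_obs_def sum_subtractf del: of_nat_Suc sum.lessThan_Suc
        flip: sum_divide_distrib)
  also have "\<dots> \<omega> = grand_mean X (Suc t) \<omega> - \<theta>" for \<omega>
    by (simp add: grand_mean_def sum.atLeast1_atMost_eq field_simps del: of_nat_Suc)
  finally have mean: "grand_mean X (Suc t) \<omega> - \<theta> = (\<Sum>p\<in>?J. 1 / ?n * centered_obs X \<theta> p \<omega>)" for \<omega>
    by simp
  have "(norm (1::real^'n))\<^sup>2 = real CARD('n)"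
    by (simp add: norm_sq_vec_eq_sum)
  then have "(\<lambda>\<omega>. (norm ((grand_mean X (Suc t) \<omega> - \<theta>) *\<^sub>R (1::real^'n)))\<^sup>2) =
      (\<lambda>\<omega>. real CARD('n) * (\<Sum>p\<in>?J. 1 / ?n * centered_obs X \<theta> p \<omega>)\<^sup>2)"
    unfolding mean by (simp add: power_mult_distrib mult.commute del: of_nat_Suc)
  then have "(\<integral>\<omega>. (norm ((grand_mean X (Suc t) \<omega> - \<theta>) *\<^sub>R (1::real^'n)))\<^sup>2 \<partial>M) =
      real CARD('n) * (\<integral>\<omega>. (\<Sum>p\<in>?J. 1 / ?n * centered_obs X \<theta> p \<omega>)\<^sup>2 \<partial>M)"
    by simp
  also have "\<dots> = real CARD('n) * (s * (real (card ?J) * (1 / ?n)\<^sup>2))"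
    by (subst uncorrelated_integral_square_sum(2)[OF Z]) simp_all
  also have "\<dots> = s / real (Suc t)"
    unfolding card_J by (simp add: power2_eq_square field_simps del: of_nat_Suc)
  finally show ?thesis .
qed

lemma perf_ratio_Suc:
  fixes A :: "real^'n^'n" and X :: "'n \<Rightarrow> nat \<Rightarrow> 'a \<Rightarrow> real"
  assumes Z: "uncorrelated M (centered_obs X \<theta>) s" and s: "s > 0" and A: "stochastic A"
  shows "perf_ratio M A X \<theta> (Suc t) = inverse (1 + cesaro_mean (\<lambda>k. dist_uniform_sq (mpow A k)) t)"
proof -
  let ?C = "cesaro_mean (\<lambda>k. dist_uniform_sq (mpow A k)) t"
  have "?C \<ge> 0"
    by (simp add: cesaro_mean_def sum_nonneg dist_uniform_sq_nonneg del: of_nat_Suc)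
  with s have "1 + ?C \<noteq> 0" "s * (real (Suc t) * (1 + ?C)) \<noteq> 0"
    by (simp_all add: add_nonneg_eq_0_iff del: of_nat_Suc)
  moreover have "frobenius_sq (mpow A k) = 1 + dist_uniform_sq (mpow A k)" for k
    using dist_uniform_sq_eq[OF stochastic_mpow[OF A]] by simp
  then have "(\<Sum>k<Suc t. frobenius_sq (mpow A k)) = real (Suc t) * (1 + ?C)"
    by (simp add: cesaro_mean_def sum.distrib field_simps del: of_nat_Suc sum.lessThan_Suc)
  ultimately show ?thesis
    unfolding perf_ratio_def integral_grand_mean_error_sq[OF Z] integral_theta_hat_error_sq[OF Z A]
    using s by (simp add: field_simps power2_eq_square del: of_nat_Suc)
qed

lemma tendsto_inverse_1_iff:
  fixes f :: "'a \<Rightarrow> 'b::real_normed_div_algebra"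
  shows "((\<lambda>x. inverse (f x)) \<longlongrightarrow> 1) F \<longleftrightarrow> (f \<longlongrightarrow> 1) F"
proof
  assume "((\<lambda>x. inverse (f x)) \<longlongrightarrow> 1) F"
  from tendsto_inverse[OF this] show "(f \<longlongrightarrow> 1) F"
    by simp
next
  assume "(f \<longlongrightarrow> 1) F"
  from tendsto_inverse[OF this] show "((\<lambda>x. inverse (f x)) \<longlongrightarrow> 1) F"
    by simp
qed

theorem theorem1:
  fixes M :: "'a measure" and A :: "real^'n^'n"
    and X :: "'n \<Rightarrow> nat \<Rightarrow> 'a \<Rightarrow> real" and D :: "real measure"
    and \<theta> \<sigma>2 :: real
  assumes "prob_space M"
    and "CARD('n) \<ge> 2"
    and "\<And>i t. t \<ge> 1 \<Longrightarrow> X i t \<in> borel_measurable M"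
    and "prob_space.indep_vars M (\<lambda>_. borel) (\<lambda>(i, t). X i t) (UNIV \<times> {1..})"
    and "\<And>i t. t \<ge> 1 \<Longrightarrow> distr M borel (X i t) = D"
    and "integrable D (\<lambda>x. x\<^sup>2)"
    and "\<theta> = (\<integral>x. x \<partial>D)"
    and "\<sigma>2 = (\<integral>x. (x - \<theta>)\<^sup>2 \<partial>D)"
    and "\<sigma>2 > 0"
    and "stochastic A"
  shows "(perf_ratio M A X \<theta> \<longlonglongrightarrow> 1) \<longleftrightarrow>
           irreducible_mat A \<and> aperiodic_mat A \<and> bistochastic A"
proof -
  let ?C = "cesaro_mean (\<lambda>k. dist_uniform_sq (mpow A k))"
  have Z: "uncorrelated M (centered_obs X \<theta>) \<sigma>2"
    using assms(1,3-8) by (rule uncorrelated_centered_obs)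
  have "(perf_ratio M A X \<theta> \<longlonglongrightarrow> 1) \<longleftrightarrow> ((\<lambda>t. perf_ratio M A X \<theta> (Suc t)) \<longlonglongrightarrow> 1)"
    by (rule filterlim_sequentially_Suc[symmetric])
  also have "\<dots> \<longleftrightarrow> ((\<lambda>t. 1 + ?C t) \<longlonglongrightarrow> 1)"
    using assms(9,10) by (simp add: perf_ratio_Suc[OF Z] tendsto_inverse_1_iff)
  also have "\<dots> \<longleftrightarrow> (?C \<longlonglongrightarrow> 0)"
    using tendsto_add_const_iff[of 1 ?C 0] by simp
  also have "\<dots> \<longleftrightarrow> irreducible_mat A \<and> aperiodic_mat A \<and> bistochastic A"
    using assms(10) by (rule cesaro_dist_uniform_sq_tendsto_0_iff)
  finally show ?thesis .
qed

end
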